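(* Let $R$ be a super-commutative $\mathbb C$-algebra. Any finitely generated subalgebra $A\subset R((t))^{\sqrt{}}$ is contained in $R((t))^{\sqrt{}}_\epsilon$ for some $\epsilon\in\mathbf E$.
   Context: $R((t))^{\sqrt{}}\subset R((t))$ is the subring of Laurent series $\sum_{n\gg-\infty}a_nt^n$ with $a_n$ nilpotent for $n<0$. $\mathbf E$ is the set of sequences $\epsilon=(\epsilon_{-1},\epsilon_{-2},\dots)$ of nonnegative integers with $\epsilon_j=0$ for $j\ll0$. For $\epsilon\in\mathbf E$, $R((t))^{\sqrt{}}_\epsilon=\{\sum_{n\in\mathbb Z}a_nt^n : a_n^{1+\epsilon_n}=0 \text{ for all } n<0\}$. *)

theory Defs
  imports Main "HOL-Computational_Algebra.Formal_Laurent_Series"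
begin

definition supercomm_C_algebra ::
  "(complex \<Rightarrow> 'a::ring_1 \<Rightarrow> 'a) \<Rightarrow> 'a set \<Rightarrow> 'a set \<Rightarrow> bool" where
  "supercomm_C_algebra sc R0 R1 \<longleftrightarrow>
     module sc \<and>
     (\<forall>c x y. sc c (x * y) = sc c x * y \<and> sc c (x * y) = x * sc c y) \<and>
     module.subspace sc R0 \<and> module.subspace sc R1 \<and>
     R0 \<inter> R1 = {0} \<and> (\<forall>x. \<exists>a\<in>R0. \<exists>b\<in>R1. x = a + b) \<and>
     (\<forall>a\<in>R0. \<forall>b\<in>R0. a * b \<in> R0) \<and>
     (\<forall>a\<in>R0. \<forall>b\<in>R1. a * b \<in> R1 \<and> b * a \<in> R1) \<and>
     (\<forall>a\<in>R1. \<forall>b\<in>R1. a * b \<in> R0) \<and>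
     (\<forall>a\<in>R0. \<forall>b\<in>R0 \<union> R1. a * b = b * a) \<and>
     (\<forall>a\<in>R1. \<forall>b\<in>R1. a * b = - (b * a))"

definition nilpotent_elt :: "'a::{monoid_mult,zero} \<Rightarrow> bool" where
  "nilpotent_elt x \<longleftrightarrow> (\<exists>k::nat. x ^ k = 0)"

text \<open>R((t))^sqrt: Laurent series (finitely many negative-degree terms, built into
the type 'a fls) whose negative-degree coefficients are nilpotent.\<close>
definition sqrt_laurent :: "'a::ring_1 fls set" where
  "sqrt_laurent = {f. \<forall>n<0. nilpotent_elt (fls_nth f n)}"

text \<open>The index set E: sequences (eps_(-1), eps_(-2), ...) of naturals, vanishing for
indices j << 0. Encoded as functions int \<Rightarrow> nat supported on negative integers.\<close>
definition E_seqs :: "(int \<Rightarrow> nat) set" where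
  "E_seqs = {e. (\<forall>j\<ge>0. e j = 0) \<and> (\<exists>N. \<forall>j<N. e j = 0)}"

definition laurent_eps :: "(int \<Rightarrow> nat) \<Rightarrow> 'a::ring_1 fls set" where
  "laurent_eps e = {f. \<forall>n<0. (fls_nth f n) ^ (1 + e n) = 0}"

text \<open>\<complex>-scalar multiplication on R((t)), coefficientwise: c\<cdot>f = (c\<cdot>1) f,
where c\<cdot>1 is central in R.\<close>
definition fls_scaleC :: "(complex \<Rightarrow> 'a::ring_1 \<Rightarrow> 'a) \<Rightarrow> complex \<Rightarrow> 'a fls \<Rightarrow> 'a fls" where
  "fls_scaleC sc c f = fls_const (sc c 1) * f"

inductive_set gen_subalg ::
  "(complex \<Rightarrow> 'a::ring_1 \<Rightarrow> 'a) \<Rightarrow> 'a fls set \<Rightarrow> 'a fls set"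
  for sc :: "complex \<Rightarrow> 'a \<Rightarrow> 'a" and S :: "'a fls set" where
  gen: "f \<in> S \<Longrightarrow> f \<in> gen_subalg sc S"
| one: "1 \<in> gen_subalg sc S"
| add: "f \<in> gen_subalg sc S \<Longrightarrow> g \<in> gen_subalg sc S \<Longrightarrow> f + g \<in> gen_subalg sc S"
| mult: "f \<in> gen_subalg sc S \<Longrightarrow> g \<in> gen_subalg sc S \<Longrightarrow> f * g \<in> gen_subalg sc S"
| scale: "f \<in> gen_subalg sc S \<Longrightarrow> fls_scaleC sc c f \<in> gen_subalg sc S"

end

theory Submission imports Defs begin

text \<open>Let \<open>H\<close> consist of the even and odd parts of the finitely many negative-degree
coefficients of the generators. These are nilpotent (odd elements square to zero, and the
even part of a nilpotent element is nilpotent) and they normalise \<open>R\<close>, so by the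
pigeonhole principle every product containing sufficiently many factors from \<open>H\<close> vanishes.
If all poles of the generators have order at most \<open>d\<close>, then the coefficient of \<open>t\<^sup>n\<close>,
\<open>n < 0\<close>, of any element of the generated subalgebra is a sum of products with at least
\<open>-n/d\<close> factors from \<open>H\<close>. Hence these coefficients vanish for \<open>n \<ll> 0\<close> and are all
nilpotent of one bounded order.\<close>

section \<open>Products with many nilpotent normal factors\<close>

text \<open>Only the inclusion \<open>R h \<subseteq> h R\<close> of normality is needed.\<close>
definition normal_elt :: "'a::ring_1 \<Rightarrow> bool" where
  "normal_elt h \<longleftrightarrow> (\<forall>x. \<exists>x'. x * h = h * x')"

text \<open>\<open>sandwiches [h\<^sub>1, \<dots>, h\<^sub>k]\<close> is the set of products \<open>r\<^sub>k h\<^sub>k \<cdots> r\<^sub>1 h\<^sub>1 r\<^sub>0\<close>.\<close>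
fun sandwiches :: "'a::ring_1 list \<Rightarrow> 'a set" where
  "sandwiches [] = UNIV"
| "sandwiches (h # hs) = {t * h * a | t a. t \<in> sandwiches hs}"

lemma sandwiches_mult_right: "t \<in> sandwiches hs \<Longrightarrow> t * r \<in> sandwiches hs"
proof (induction hs arbitrary: t)
  case (Cons h hs)
  then obtain t' a where "t = t' * h * a" "t' \<in> sandwiches hs" by auto
  then show ?case by (auto simp: mult.assoc)
qed simp

lemma sandwiches_mult_left: "t \<in> sandwiches hs \<Longrightarrow> r * t \<in> sandwiches hs"
proof (induction hs arbitrary: t)
  case (Cons h hs)
  then obtain t' a where "t = t' * h * a" "t' \<in> sandwiches hs" by auto
  moreover have "r * t = (r * t') * h * a" using \<open>t = t' * h * a\<close> by (simp add: mult.assoc)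
  ultimately show ?case using Cons.IH by auto
qed simp

lemma sandwiches_mult: "s \<in> sandwiches hs \<Longrightarrow> t \<in> sandwiches gs \<Longrightarrow> s * t \<in> sandwiches (gs @ hs)"
proof (induction gs arbitrary: t)
  case Nil
  then show ?case by (simp add: sandwiches_mult_right)
next
  case (Cons g gs)
  then obtain t' a where "t = t' * g * a" "t' \<in> sandwiches gs" by auto
  moreover have "s * t = (s * t') * g * a" using \<open>t = t' * g * a\<close> by (simp add: mult.assoc)
  ultimately show ?case using Cons by auto
qed

lemma sandwiches_factor_power:
  assumes "normal_elt h" and "t \<in> sandwiches hs"
  shows "\<exists>c b. t = c * h ^ count_list hs h * b"
  using assms(2)
proof (induction hs arbitrary: t)
  case Nil
  have "t = t * h ^ count_list [] h * 1" by simp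
  then show ?case by blast
next
  case (Cons g hs)
  then obtain t' a c b where t: "t = t' * g * a" and t': "t' = c * h ^ count_list hs h * b"
    by force
  show ?case
  proof (cases "g = h")
    case True
    obtain b' where "b * h = h * b'" using assms(1) unfolding normal_elt_def by blast
    then have "t = c * (h ^ count_list hs h * h) * (b' * a)"
      using t t' True by (simp add: mult.assoc)
    then show ?thesis using True by (auto simp: power_commutes)
  next
    case False
    then have "t = c * h ^ count_list (g # hs) h * (b * g * a)"
      using t t' by (simp add: mult.assoc)
    then show ?thesis by blast
  qed
qed

lemma sandwiches_eq_0_if_nilpotent_factor:
  assumes "normal_elt h" "h ^ M = 0" "M \<le> count_list hs h" "t \<in> sandwiches hs"
  shows "t = 0"
proof -
  obtain c b where "t = c * h ^ count_list hs h * b"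
    using sandwiches_factor_power assms(1,4) by blast
  moreover have "h ^ count_list hs h = 0"
    using assms(2,3) by (metis le_add_diff_inverse power_add mult_zero_left)
  ultimately show ?thesis by simp
qed

lemma count_list_pigeonhole:
  assumes "finite H" "set hs \<subseteq> H" "card H * M < length hs"
  shows "\<exists>h\<in>H. M \<le> count_list hs h"
proof (rule ccontr)
  assume "\<not> ?thesis"
  then have "sum (count_list hs) H \<le> sum (\<lambda>_. M) H"
    by (intro sum_mono) (auto simp: not_le less_imp_le)
  then show False
    using assms sum_count_set[OF assms(2,1)] by simp
qed

lemma sandwiches_vanish_if_long:
  assumes "finite H" and "\<And>h. h \<in> H \<Longrightarrow> normal_elt h \<and> (\<exists>k. h ^ k = 0)"
  obtains K where "\<And>hs t. set hs \<subseteq> H \<Longrightarrow> K \<le> length hs \<Longrightarrow> t \<in> sandwiches hs \<Longrightarrow> t = 0"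
proof -
  obtain k where k: "\<And>h. h \<in> H \<Longrightarrow> h ^ k h = 0" using assms(2) by metis
  define M where "M = (\<Sum>h\<in>H. k h)"
  have "h ^ M = 0" if "h \<in> H" for h
  proof -
    have "k h \<le> M" unfolding M_def using member_le_sum[OF that, of k] assms(1) by simp
    then show ?thesis using k[OF that] by (metis le_add_diff_inverse power_add mult_zero_left)
  qed
  moreover have "\<exists>h\<in>H. M \<le> count_list hs h" if "set hs \<subseteq> H" "card H * M + 1 \<le> length hs" for hs
    using count_list_pigeonhole[OF assms(1) that(1)] that(2) by simp
  ultimately show ?thesis
    using that[of "card H * M + 1"] assms(2) sandwiches_eq_0_if_nilpotent_factor by metis
qed

text \<open>The sums of sandwiches in which each factor from \<open>H\<close> carries weight \<open>d\<close> and the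
total weight is at least \<open>w\<close>: the two-sided ideal power \<open>(H)\<^bsup>\<lceil>w/d\<rceil>\<^esup>\<close>.\<close>
inductive_set weighted_ideal :: "'a::ring_1 set \<Rightarrow> nat \<Rightarrow> int \<Rightarrow> 'a set" for H d w where
  zero: "0 \<in> weighted_ideal H d w"
| sandwich: "set hs \<subseteq> H \<Longrightarrow> t \<in> sandwiches hs \<Longrightarrow> w \<le> int d * int (length hs)
    \<Longrightarrow> t \<in> weighted_ideal H d w"
| add: "x \<in> weighted_ideal H d w \<Longrightarrow> y \<in> weighted_ideal H d w \<Longrightarrow> x + y \<in> weighted_ideal H d w"

lemma weighted_ideal_nonpos: "w \<le> 0 \<Longrightarrow> x \<in> weighted_ideal H d w"
  by (rule weighted_ideal.sandwich[of "[]"]) simp_all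

lemma weighted_ideal_generator: "h \<in> H \<Longrightarrow> w \<le> int d \<Longrightarrow> h \<in> weighted_ideal H d w"
  by (rule weighted_ideal.sandwich[of "[h]"]) (simp_all, metis mult_1_left mult_1_right)

lemma weighted_ideal_mult_left: "x \<in> weighted_ideal H d w \<Longrightarrow> r * x \<in> weighted_ideal H d w"
  by (induction rule: weighted_ideal.induct)
    (auto simp: distrib_left intro: weighted_ideal.intros sandwiches_mult_left)

lemma weighted_ideal_antimono: "x \<in> weighted_ideal H d w \<Longrightarrow> w' \<le> w \<Longrightarrow> x \<in> weighted_ideal H d w'"
  by (induction rule: weighted_ideal.induct) (auto intro: weighted_ideal.intros)

lemma weighted_ideal_mult:
  assumes "x \<in> weighted_ideal H d v" "y \<in> weighted_ideal H d w"
  shows "x * y \<in> weighted_ideal H d (v + w)"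
  using assms
proof (induction rule: weighted_ideal.induct)
  case (sandwich hs t)
  from sandwich.prems show ?case
  proof (induction rule: weighted_ideal.induct)
    case (sandwich gs s)
    with \<open>set hs \<subseteq> H\<close> \<open>t \<in> sandwiches hs\<close> \<open>v \<le> int d * int (length hs)\<close> show ?case
      by (intro weighted_ideal.sandwich[of "gs @ hs"]) (auto simp: sandwiches_mult algebra_simps)
  qed (simp_all add: distrib_left weighted_ideal.intros)
qed (simp_all add: distrib_right weighted_ideal.intros)

lemma weighted_ideal_sum:
  "finite A \<Longrightarrow> (\<And>i. i \<in> A \<Longrightarrow> f i \<in> weighted_ideal H d w) \<Longrightarrow> sum f A \<in> weighted_ideal H d w"
  by (induction A rule: finite_induct) (auto intro: weighted_ideal.intros)

lemma weighted_ideal_power: "x \<in> weighted_ideal H d 1 \<Longrightarrow> x ^ n \<in> weighted_ideal H d (int n)"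
proof (induction n)
  case 0
  show ?case by (simp add: weighted_ideal.sandwich[of "[]"])
next
  case (Suc n)
  then show ?case using weighted_ideal_mult[of x H d 1 "x ^ n" "int n"] by simp
qed

lemma weighted_ideal_eq_0:
  assumes "d > 0"
    and "\<And>hs t. set hs \<subseteq> H \<Longrightarrow> K \<le> length hs \<Longrightarrow> t \<in> sandwiches hs \<Longrightarrow> t = 0"
    and "x \<in> weighted_ideal H d w" "int (d * K) \<le> w"
  shows "x = 0"
  using assms(3,4)
proof (induction rule: weighted_ideal.induct)
  case (sandwich hs t)
  then have "int d * int K \<le> int d * int (length hs)" by simp
  then have "K \<le> length hs" using assms(1) by (simp add: mult_le_cancel_left)
  with sandwich assms(2) show ?case by blast
qed auto

section \<open>Homogeneous elements of a super-commutative algebra\<close>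

lemma
  assumes "supercomm_C_algebra sc R0 R1"
  shows supercomm_module: "module sc"
    and supercomm_odd_subspace: "module.subspace sc R1"
    and supercomm_even_odd_inter: "R0 \<inter> R1 = {0}"
    and supercomm_decomp: "\<exists>a\<in>R0. \<exists>b\<in>R1. x = a + b"
    and supercomm_even_mult: "a \<in> R0 \<Longrightarrow> a' \<in> R0 \<Longrightarrow> a * a' \<in> R0"
    and supercomm_even_odd_mult: "a \<in> R0 \<Longrightarrow> b \<in> R1 \<Longrightarrow> a * b \<in> R1"
    and supercomm_even_comm: "a \<in> R0 \<Longrightarrow> y \<in> R0 \<union> R1 \<Longrightarrow> a * y = y * a"
    and supercomm_odd_anticomm: "b \<in> R1 \<Longrightarrow> b' \<in> R1 \<Longrightarrow> b * b' = - (b' * b)"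
  using assms unfolding supercomm_C_algebra_def by (elim conjE; blast)+

lemma supercomm_add_self_eq_0:
  fixes sc :: "complex \<Rightarrow> 'a::ring_1 \<Rightarrow> 'a" and x :: 'a
  assumes "supercomm_C_algebra sc R0 R1" "x + x = 0"
  shows "x = 0"
proof -
  have m: "module sc" using assms(1) by (rule supercomm_module)
  have "sc 2 x = x + x"
    using module.scale_left_distrib[OF m, of 1 1 x] module.scale_one[OF m] by simp
  then have "sc (1/2) (sc 2 x) = 0"
    using assms(2) by (simp add: module.scale_zero_right[OF m])
  then show ?thesis by (simp add: module.scale_scale[OF m] module.scale_one[OF m])
qed

lemma supercomm_odd_square_eq_0:
  assumes "supercomm_C_algebra sc R0 R1" "b \<in> R1"
  shows "b * b = 0"
proof -
  have "b * b = - (b * b)" using supercomm_odd_anticomm[OF assms(1) assms(2,2)] .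
  then have "b * b + b * b = 0" by (metis add.right_inverse)
  then show ?thesis using supercomm_add_self_eq_0[OF assms(1)] by blast
qed

lemma supercomm_homogeneous_normal:
  assumes sc: "supercomm_C_algebra sc R0 R1" and "h \<in> R0 \<union> R1"
  shows "normal_elt h"
  unfolding normal_elt_def
proof
  fix x
  obtain a b where ab: "a \<in> R0" "b \<in> R1" "x = a + b"
    using supercomm_decomp[OF sc] by blast
  show "\<exists>x'. x * h = h * x'"
  proof (cases "h \<in> R0")
    case True
    then have "h * a = a * h" "h * b = b * h"
      using supercomm_even_comm[OF sc] ab by blast+
    then have "x * h = h * x" by (simp add: ab(3) algebra_simps)
    then show ?thesis by blast
  next
    case False
    then have "a * h = h * a" "b * h = - (h * b)"
      using supercomm_even_comm[OF sc] supercomm_odd_anticomm[OF sc] ab \<open>h \<in> R0 \<union> R1\<close>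
      by blast+
    then have "x * h = h * (a - b)" by (simp add: ab(3) algebra_simps)
    then show ?thesis by blast
  qed
qed

lemma binomial_square_zero:
  fixes a b :: "'a::ring_1"
  assumes "b * a = a * b" "b * b = 0"
  shows "(a + b) ^ Suc n = a ^ Suc n + of_nat (Suc n) * (a ^ n * b)"
proof (induction n)
  case (Suc n)
  have "a ^ n * b * a = a ^ n * a * b" by (simp add: mult.assoc assms(1))
  also have "\<dots> = a ^ Suc n * b" by (simp only: power_Suc2)
  finally have ba: "a ^ n * b * a = a ^ Suc n * b" .
  have "(a + b) ^ Suc (Suc n) = (a ^ Suc n + of_nat (Suc n) * (a ^ n * b)) * (a + b)"
    by (simp only: power_Suc2[of "a + b" "Suc n"] Suc)
  also have "\<dots> = a ^ Suc (Suc n) + of_nat (Suc (Suc n)) * (a ^ Suc n * b)"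
    using ba by (simp add: algebra_simps assms(2) power_commutes)
  finally show ?case .
qed simp

text \<open>Comparing parities in \<open>0 = (a + b)\<^bsup>k+1\<^esup> = a\<^bsup>k+1\<^esup> + (k+1) a\<^sup>k b\<close>.\<close>
lemma supercomm_even_part_nilpotent:
  assumes sc: "supercomm_C_algebra sc R0 R1" and "a \<in> R0" "b \<in> R1" "(a + b) ^ k = 0"
  shows "a ^ Suc k = 0"
proof -
  have m: "module sc" and s1: "module.subspace sc R1"
    using supercomm_module[OF sc] supercomm_odd_subspace[OF sc] .
  have "a ^ Suc n \<in> R0" for n
    by (induction n) (use \<open>a \<in> R0\<close> supercomm_even_mult[OF sc] in auto)
  moreover have "a ^ n * b \<in> R1" for n
    by (induction n) (use assms(2,3) supercomm_even_odd_mult[OF sc] in \<open>auto simp: mult.assoc\<close>)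
  then have "of_nat n * (a ^ k * b) \<in> R1" for n
    by (induction n)
      (auto simp: distrib_right module.subspace_0[OF m s1] module.subspace_add[OF m s1])
  moreover have "a ^ Suc k = - (of_nat (Suc k) * (a ^ k * b))"
  proof -
    have "b * a = a * b" using supercomm_even_comm[OF sc assms(2), of b] assms(3) by simp
    moreover have "b * b = 0" using supercomm_odd_square_eq_0[OF sc assms(3)] .
    moreover have "(a + b) ^ Suc k = 0" using \<open>(a + b) ^ k = 0\<close> by simp
    ultimately have "a ^ Suc k + of_nat (Suc k) * (a ^ k * b) = 0"
      using binomial_square_zero by metis
    then show ?thesis by (simp add: eq_neg_iff_add_eq_0)
  qed
  ultimately have "a ^ Suc k \<in> R0 \<inter> R1"
    using module.subspace_neg[OF m s1] by (metis IntI)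
  then show ?thesis using supercomm_even_odd_inter[OF sc] by blast
qed

lemma supercomm_nilpotent_parts:
  assumes sc: "supercomm_C_algebra sc R0 R1" and "a \<in> R0" "x - a \<in> R1" "x ^ k = 0"
  shows "a ^ Suc k = 0" "(x - a) ^ 2 = 0"
proof -
  show "a ^ Suc k = 0"
    using supercomm_even_part_nilpotent[OF sc assms(2,3)] assms(4) by simp
  show "(x - a) ^ 2 = 0"
    using supercomm_odd_square_eq_0[OF sc assms(3)] by (simp add: power2_eq_square)
qed

section \<open>Coefficients of negative degree\<close>

lemma finite_fls_poles_bounded:
  assumes "finite S"
  obtains d :: nat where "d > 0" "\<And>g n. g \<in> S \<Longrightarrow> n < - int d \<Longrightarrow> fls_nth g n = 0"
proof
  define d where "d = 1 + (\<Sum>g\<in>S. nat (- fls_subdegree g))"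
  show "d > 0" unfolding d_def by simp
  fix g n assume "g \<in> S" "n < - int d"
  moreover have "nat (- fls_subdegree g) \<le> d - 1"
    using member_le_sum[OF \<open>g \<in> S\<close>, of "\<lambda>g. nat (- fls_subdegree g)"] assms
    unfolding d_def by simp
  ultimately show "fls_nth g n = 0" by simp
qed

lemma supercomm_sqrt_laurent_coeffs_in_weighted_ideal:
  fixes sc :: "complex \<Rightarrow> 'a::ring_1 \<Rightarrow> 'a" and S :: "'a fls set"
  assumes sc: "supercomm_C_algebra sc R0 R1" and "finite S" "S \<subseteq> sqrt_laurent"
  obtains H d where "finite H" "\<And>h. h \<in> H \<Longrightarrow> normal_elt h \<and> (\<exists>k. h ^ k = 0)" "d > 0"
    "\<And>g n. g \<in> S \<Longrightarrow> n < 0 \<Longrightarrow> fls_nth g n \<in> weighted_ideal H d (- n)"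
proof -
  have "\<forall>x. \<exists>a. a \<in> R0 \<and> x - a \<in> R1"
    using supercomm_decomp[OF sc] by (metis add_diff_cancel_left')
  then obtain p0 where p0: "\<And>x. p0 x \<in> R0" "\<And>x. x - p0 x \<in> R1" by metis
  obtain d where "d > 0" and poles: "\<And>g n. g \<in> S \<Longrightarrow> n < - int d \<Longrightarrow> fls_nth g n = 0"
    using finite_fls_poles_bounded[OF \<open>finite S\<close>] by blast
  define C where "C = (\<lambda>(g, n). fls_nth g n) ` (S \<times> {- int d..-1})"
  define H where "H = p0 ` C \<union> (\<lambda>x. x - p0 x) ` C"
  have "finite H" unfolding H_def C_def using \<open>finite S\<close> by simp
  moreover have "normal_elt h \<and> (\<exists>k. h ^ k = 0)" if "h \<in> H" for h
  proof -
    obtain x where "x \<in> C" and h: "h = p0 x \<or> h = x - p0 x" using \<open>h \<in> H\<close> unfolding H_def by blast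
    then obtain g n where "g \<in> S" "n < 0" "x = fls_nth g n" unfolding C_def by force
    then obtain k where "x ^ k = 0"
      using assms(3) unfolding sqrt_laurent_def nilpotent_elt_def by blast
    then show ?thesis
      using h p0 supercomm_nilpotent_parts[OF sc] supercomm_homogeneous_normal[OF sc] by blast
  qed
  moreover have "fls_nth g n \<in> weighted_ideal H d (- n)" if "g \<in> S" "n < 0" for g n
  proof (cases "n < - int d")
    case True
    then show ?thesis using poles[OF that(1)] weighted_ideal.zero by simp
  next
    case False
    then have "fls_nth g n \<in> C" unfolding C_def using that by force
    then have "p0 (fls_nth g n) + (fls_nth g n - p0 (fls_nth g n)) \<in> weighted_ideal H d (- n)"
      using False by (intro weighted_ideal.add weighted_ideal_generator) (auto simp: H_def)
    then show ?thesis by simp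
  qed
  ultimately show ?thesis using that \<open>d > 0\<close> by blast
qed

text \<open>Membership is trivial for \<open>n \<ge> 0\<close>, so the invariant holds in all degrees, and then the
weight \<open>-n = -i + -(n - i)\<close> of each term of a product coefficient is additive.\<close>
lemma gen_subalg_coeffs_in_weighted_ideal:
  assumes "\<And>g n. g \<in> S \<Longrightarrow> n < 0 \<Longrightarrow> fls_nth g n \<in> weighted_ideal H d (- n)"
    and "f \<in> gen_subalg sc S"
  shows "fls_nth f n \<in> weighted_ideal H d (- n)"
  using assms(2)
proof (induction arbitrary: n rule: gen_subalg.induct)
  case (gen f)
  then show ?case using assms(1) weighted_ideal_nonpos[of "- n"] by (cases "n < 0") auto
next
  case one
  then show ?case by (simp add: weighted_ideal_nonpos weighted_ideal.zero)
next
  case (add f g)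
  then show ?case by (simp add: weighted_ideal.add)
next
  case (mult f g)
  have "fls_nth f i * fls_nth g (n - i) \<in> weighted_ideal H d (- n)" for i
    using weighted_ideal_mult[OF mult.IH(1)[of i] mult.IH(2)[of "n - i"]] by simp
  then show ?case by (simp add: fls_times_nth(2) weighted_ideal_sum)
next
  case (scale f c)
  then show ?case by (simp add: fls_scaleC_def weighted_ideal_mult_left)
qed

lemma laurent_eps_if_coeffs_in_weighted_ideal:
  assumes "\<And>n. n < 0 \<Longrightarrow> fls_nth f n \<in> weighted_ideal H d (- n)"
    and "\<And>x w. x \<in> weighted_ideal H d w \<Longrightarrow> int B \<le> w \<Longrightarrow> x = 0"
  shows "f \<in> laurent_eps (\<lambda>n. if - int B \<le> n \<and> n < 0 then B else 0)"
  unfolding laurent_eps_def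
proof (intro CollectI allI impI)
  fix n :: int assume "n < 0"
  then have coeff: "fls_nth f n \<in> weighted_ideal H d (- n)" by (rule assms(1))
  show "fls_nth f n ^ (1 + (if - int B \<le> n \<and> n < 0 then B else 0)) = 0"
  proof (cases "- int B \<le> n")
    case True
    have "fls_nth f n \<in> weighted_ideal H d 1"
      using weighted_ideal_antimono[OF coeff] \<open>n < 0\<close> by simp
    then have "fls_nth f n ^ B = 0" using weighted_ideal_power assms(2) by blast
    then show ?thesis using True \<open>n < 0\<close> by simp
  next
    case False
    then show ?thesis using assms(2)[OF coeff] by simp
  qed
qed

theorem proposition4p1p5:
  fixes sc :: "complex \<Rightarrow> 'a::ring_1 \<Rightarrow> 'a"
    and R0 R1 :: "'a set"
    and S :: "'a fls set"
  assumes "supercomm_C_algebra sc R0 R1"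
    and "finite S"
    and "gen_subalg sc S \<subseteq> sqrt_laurent"
  shows "\<exists>e\<in>E_seqs. gen_subalg sc S \<subseteq> laurent_eps e"
proof -
  have "S \<subseteq> sqrt_laurent" using assms(3) gen_subalg.gen by blast
  then obtain H d where H: "finite H" "\<And>h. h \<in> H \<Longrightarrow> normal_elt h \<and> (\<exists>k. h ^ k = 0)"
    and "d > 0" and gens: "\<And>g n. g \<in> S \<Longrightarrow> n < 0 \<Longrightarrow> fls_nth g n \<in> weighted_ideal H d (- n)"
    using supercomm_sqrt_laurent_coeffs_in_weighted_ideal[OF assms(1,2)] by blast
  obtain K where "\<And>hs t. set hs \<subseteq> H \<Longrightarrow> K \<le> length hs \<Longrightarrow> t \<in> sandwiches hs \<Longrightarrow> t = 0"
    using sandwiches_vanish_if_long[OF H] by blast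
  then have vanish: "x = 0" if "x \<in> weighted_ideal H d w" "int (d * K) \<le> w" for x w
    using weighted_ideal_eq_0[OF \<open>d > 0\<close>] that by blast
  define e where "e = (\<lambda>n. if - int (d * K) \<le> n \<and> n < 0 then d * K else 0)"
  have "e \<in> E_seqs" unfolding E_seqs_def e_def by (auto intro!: exI[of _ "- int (d * K)"])
  moreover have "f \<in> laurent_eps e" if "f \<in> gen_subalg sc S" for f
  proof -
    have "fls_nth f n \<in> weighted_ideal H d (- n)" for n
      using gen_subalg_coeffs_in_weighted_ideal[of S H d, OF gens that] .
    then show ?thesis
      unfolding e_def by (intro laurent_eps_if_coeffs_in_weighted_ideal vanish)
  qed
  ultimately show ?thesis by blast
qed

end
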